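(* Let $Z$ be a compact metrisable space, let $\mathfrak{X}$ be a $Z$-valued switched Bebutov shift, and let $\phi\in\mathfrak{X}$ be recurrent with respect to the shift semiflow $(\sigma^t)_{t\ge0}$. Then for every $s\ge0$ there exists $\psi\in\mathfrak{X}$ such that $\sigma^s\psi=\phi$.
   Context: $C([0,\infty),Z)$ carries the compact-open topology (uniform convergence on compact sets). $(\sigma^\tau\phi)(t)\coloneq\phi(\tau+t)$. A $Z$-valued Bebutov shift is a set $\mathfrak{X}\subseteq C([0,\infty),Z)$, compact in the compact-open topology, with $\sigma^\tau\phi\in\mathfrak{X}$ for all $\phi\in\mathfrak{X}$, $\tau\ge0$. It is switched if moreover: whenever $\phi_1,\phi_2\in\mathfrak{X}$ satisfy $\phi_1(\tau)=\phi_2(\tau)$ for some $\tau>0$, the function equal to $\phi_1$ on $[0,\tau]$ and to $\phi_2$ on $[\tau,\infty)$ belongs to $\mathfrak{X}$. $\phi$ is recurrent if there exist $t_n\to\infty$ with $\sigma^{t_n}\phi\to\phi$ in the compact-open topology. *)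

theory Defs
  imports "HOL-Analysis.Analysis"
begin

text \<open>Elements of C([0,\<infinity>),Z) are represented as functions real => 'z that are
continuous on [0,\<infinity>) and equal to undefined on the negative reals (extensional convention).\<close>

definition Cpos :: "(real \<Rightarrow> 'z::topological_space) set" where
  "Cpos = {f. continuous_on {0..} f \<and> (\<forall>t<0. f t = undefined)}"

definition compact_open_topology :: "(real \<Rightarrow> 'z::topological_space) topology" where
  "compact_open_topology =
     subtopology (topology_generated_by
        {{f. f ` K \<subseteq> U} | K U. compact K \<and> K \<subseteq> {0..} \<and> open U}) Cpos"

definition bshift :: "real \<Rightarrow> (real \<Rightarrow> 'z) \<Rightarrow> (real \<Rightarrow> 'z)" where
  "bshift \<tau> \<phi> = (\<lambda>t. if 0 \<le> t then \<phi> (\<tau> + t) else undefined)"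

definition bebutov_shift :: "(real \<Rightarrow> 'z::topological_space) set \<Rightarrow> bool" where
  "bebutov_shift X \<longleftrightarrow> X \<subseteq> Cpos \<and> compactin compact_open_topology X \<and>
     (\<forall>\<phi>\<in>X. \<forall>\<tau>\<ge>0. bshift \<tau> \<phi> \<in> X)"

definition switched_bebutov_shift :: "(real \<Rightarrow> 'z::topological_space) set \<Rightarrow> bool" where
  "switched_bebutov_shift X \<longleftrightarrow> bebutov_shift X \<and>
     (\<forall>\<phi>1\<in>X. \<forall>\<phi>2\<in>X. \<forall>\<tau>>0. \<phi>1 \<tau> = \<phi>2 \<tau> \<longrightarrow>
        (\<lambda>t. if t \<le> \<tau> then \<phi>1 t else \<phi>2 t) \<in> X)"

definition recurrent :: "(real \<Rightarrow> 'z::topological_space) \<Rightarrow> bool" where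
  "recurrent \<phi> \<longleftrightarrow> (\<exists>t::nat \<Rightarrow> real. filterlim t at_top sequentially \<and>
     limitin compact_open_topology (\<lambda>n. bshift (t n) \<phi>) \<phi> sequentially)"

end

theory Submission
  imports Defs
begin

text \<open>Choose times t_n \<rightarrow> \<infinity> with \<sigma>(t_n) \<phi> \<rightarrow> \<phi>. The functions \<sigma>(t_n - s) \<phi> lie in the compact set
X, so they have a cluster point \<psi> \<in> X. Evaluation at a point is continuous for the
compact-open topology, so \<psi>(s + t) is a cluster value of \<phi>(t_n + t), which converges to
\<phi>(t); as Z is Hausdorff, \<psi>(s + t) = \<phi>(t), i.e. \<sigma>(s) \<psi> = \<phi>.\<close>

lemma compactin_imp_cluster_point:
  assumes "compactin T X" "F \<noteq> bot" "eventually (\<lambda>n. x n \<in> X) F"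
  shows "\<exists>p\<in>X. \<forall>W. openin T W \<longrightarrow> p \<in> W \<longrightarrow> (\<exists>\<^sub>F n in F. x n \<in> W)"
proof (rule ccontr)
  assume "\<not> ?thesis"
  then have "\<forall>p\<in>X. \<exists>W. openin T W \<and> p \<in> W \<and> (\<forall>\<^sub>F n in F. x n \<notin> W)"
    by (simp add: not_frequently)
  then obtain W where W: "\<And>p. p \<in> X \<Longrightarrow> openin T (W p) \<and> p \<in> W p \<and> (\<forall>\<^sub>F n in F. x n \<notin> W p)"
    by metis
  then have "X \<subseteq> \<Union> (W ` X)" "\<forall>U \<in> W ` X. openin T U"
    by blast+
  then obtain \<F> where "finite \<F>" "\<F> \<subseteq> W ` X" "X \<subseteq> \<Union> \<F>"
    using assms(1) unfolding compactin_def by meson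
  then obtain G where G: "finite G" "G \<subseteq> X" "X \<subseteq> (\<Union>p\<in>G. W p)"
    by (metis finite_subset_image)
  have "\<exists>\<^sub>F n in F. \<exists>p\<in>G. x n \<in> W p"
    using eventually_frequently[OF assms(2,3)] by (rule frequently_elim1) (use G(3) in blast)
  then obtain p where "p \<in> G" "\<exists>\<^sub>F n in F. x n \<in> W p"
    using frequently_bex_finite[OF G(1), where P="\<lambda>n p. x n \<in> W p"] by blast
  with W G(2) show False
    by (auto simp: frequently_def)
qed

lemma cluster_point_eq_limit:
  fixes a :: "'b \<Rightarrow> 'z::t2_space"
  assumes "(a \<longlongrightarrow> q) F" and "\<And>U. open U \<Longrightarrow> p \<in> U \<Longrightarrow> (\<exists>\<^sub>F n in F. a n \<in> U)"
  shows "p = q"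
proof (rule ccontr)
  assume "p \<noteq> q"
  then obtain U V where UV: "open U" "open V" "p \<in> U" "q \<in> V" "U \<inter> V = {}"
    by (metis separation_t2)
  have "\<exists>\<^sub>F n in F. a n \<in> U"
    using UV(1,3) by (rule assms(2))
  moreover have "\<forall>\<^sub>F n in F. a n \<in> V"
    using assms(1) UV(2,4) by (rule topological_tendstoD)
  ultimately have "\<exists>\<^sub>F n in F. a n \<in> V \<and> a n \<in> U"
    by (rule frequently_eventually_conj)
  then have "\<exists>\<^sub>F n in F. False"
    by (rule frequently_elim1) (use UV(5) in blast)
  then show False
    by simp
qed

lemma topspace_compact_open_topology [simp]: "topspace compact_open_topology = Cpos"
proof -
  have "UNIV \<in> {{f. f ` K \<subseteq> U} | K U. compact K \<and> K \<subseteq> {0..} \<and> open U}"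
    by (intro CollectI exI[of _ "{}"] exI[of _ UNIV]) simp
  then show ?thesis
    unfolding compact_open_topology_def topspace_subtopology topology_generated_by_topspace by blast
qed

lemma openin_compact_open_evaluation:
  assumes "open U" "t \<ge> 0"
  shows "openin compact_open_topology {f \<in> Cpos. f t \<in> U}"
proof -
  have "{f. f ` {t} \<subseteq> U} \<in> {{f. f ` K \<subseteq> U} | K U. compact K \<and> K \<subseteq> {0..} \<and> open U}"
    using assms by (intro CollectI exI[of _ "{t}"] exI[of _ U]) simp
  then have "openin (topology_generated_by {{f. f ` K \<subseteq> U} | K U. compact K \<and> K \<subseteq> {0..} \<and> open U})
          {f. f ` {t} \<subseteq> U}"
    by (rule topology_generated_by_Basis)
  moreover have "{f \<in> Cpos. f t \<in> U} = {f. f ` {t} \<subseteq> U} \<inter> Cpos"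
    by auto
  ultimately show ?thesis
    unfolding compact_open_topology_def openin_subtopology by blast
qed

lemma limitin_compact_open_imp_tendsto:
  assumes "limitin compact_open_topology f g F" "t \<ge> 0"
  shows "((\<lambda>n. f n t) \<longlongrightarrow> g t) F"
proof (rule topological_tendstoI)
  fix U assume "open U" "g t \<in> U"
  moreover have "g \<in> Cpos"
    using assms(1) by (simp add: limitin_def)
  ultimately have "\<forall>\<^sub>F n in F. f n \<in> {f \<in> Cpos. f t \<in> U}"
    using assms openin_compact_open_evaluation unfolding limitin_def by blast
  then show "\<forall>\<^sub>F n in F. f n t \<in> U"
    by (auto elim: eventually_mono)
qed

lemma bshift_eq_of_cluster_point:
  fixes \<psi> \<phi> :: "real \<Rightarrow> 'z::t2_space"
  assumes "\<psi> \<in> Cpos" "\<phi> \<in> Cpos" "s \<ge> 0"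
    and cluster: "\<And>W. openin compact_open_topology W \<Longrightarrow> \<psi> \<in> W \<Longrightarrow> (\<exists>\<^sub>F n in F. x n \<in> W)"
    and lim: "\<And>t. t \<ge> 0 \<Longrightarrow> ((\<lambda>n. x n (s + t)) \<longlongrightarrow> \<phi> t) F"
  shows "bshift s \<psi> = \<phi>"
proof
  fix t
  show "bshift s \<psi> t = \<phi> t"
  proof (cases "t \<ge> 0")
    case True
    have "\<exists>\<^sub>F n in F. x n (s + t) \<in> U" if "open U" "\<psi> (s + t) \<in> U" for U
    proof -
      have "openin compact_open_topology {f \<in> Cpos. f (s + t) \<in> U}"
        using openin_compact_open_evaluation[OF that(1)] assms(3) True by simp
      then have "\<exists>\<^sub>F n in F. x n \<in> {f \<in> Cpos. f (s + t) \<in> U}"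
        using cluster that(2) assms(1) by blast
      then show ?thesis
        by (rule frequently_elim1) simp
    qed
    then have "\<psi> (s + t) = \<phi> t"
      using cluster_point_eq_limit lim True by blast
    with True show ?thesis
      by (simp add: bshift_def)
  next
    case False
    with assms(2) show ?thesis
      by (simp add: bshift_def Cpos_def)
  qed
qed

theorem lemma2p20:
  fixes X :: "(real \<Rightarrow> 'z::metric_space) set" and \<phi> :: "real \<Rightarrow> 'z"
  assumes "compact (UNIV :: 'z set)"
    and "switched_bebutov_shift X"
    and "\<phi> \<in> X"
    and "recurrent \<phi>"
  shows "\<forall>s\<ge>0. \<exists>\<psi>\<in>X. bshift s \<psi> = \<phi>"
proof (intro allI impI)
  fix s :: real assume "s \<ge> 0"
  have X: "X \<subseteq> Cpos" "compactin compact_open_topology X" "\<And>f \<tau>. f \<in> X \<Longrightarrow> \<tau> \<ge> 0 \<Longrightarrow> bshift \<tau> f \<in> X"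
    using assms(2) unfolding switched_bebutov_shift_def bebutov_shift_def by auto
  obtain \<tau> :: "nat \<Rightarrow> real" where \<tau>: "filterlim \<tau> at_top sequentially"
    and lim: "limitin compact_open_topology (\<lambda>n. bshift (\<tau> n) \<phi>) \<phi> sequentially"
    using assms(4) unfolding recurrent_def by blast
  define x where "x n = bshift (max 0 (\<tau> n - s)) \<phi>" for n
  obtain \<psi> where "\<psi> \<in> X"
    and cluster: "\<And>W. openin compact_open_topology W \<Longrightarrow> \<psi> \<in> W \<Longrightarrow> (\<exists>\<^sub>F n in sequentially. x n \<in> W)"
    using compactin_imp_cluster_point[OF X(2), of sequentially x] X(3) assms(3)
    by (auto simp: x_def)
  have "((\<lambda>n. x n (s + t)) \<longlongrightarrow> \<phi> t) sequentially" if "t \<ge> 0" for t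
  proof (rule Lim_transform_eventually)
    show "((\<lambda>n. bshift (\<tau> n) \<phi> t) \<longlongrightarrow> \<phi> t) sequentially"
      using limitin_compact_open_imp_tendsto[OF lim that] .
    show "\<forall>\<^sub>F n in sequentially. bshift (\<tau> n) \<phi> t = x n (s + t)"
      using filterlim_at_top_dense[THEN iffD1, OF \<tau>, rule_format, of s] \<open>s \<ge> 0\<close> that
      by (auto simp: x_def bshift_def elim: eventually_mono)
  qed
  then have "bshift s \<psi> = \<phi>"
    using bshift_eq_of_cluster_point \<open>\<psi> \<in> X\<close> X(1) assms(3) \<open>s \<ge> 0\<close> cluster by blast
  with \<open>\<psi> \<in> X\<close> show "\<exists>\<psi>\<in>X. bshift s \<psi> = \<phi>" by blast
qed

end
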